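(* Let $\mathcal{A}\in\mathbb{C}^{I_{1\ldots N}\times I_{1\ldots N}}$ satisfy $W(\mathcal{A})=W(\mathcal{A}^H)$, and let $\mathcal{M}=\mathcal{N}=\beta\mathcal{I}\in\mathbb{C}^{I_{1\ldots N}\times I_{1\ldots N}}$ be Hermitian positive definite tensors ($\beta$ a scalar, $\mathcal{I}$ the identity tensor). Then $W(\mathcal{A})\cap\mu^2W(\mathcal{A}^{\dagger}_{\mathcal{M},\mathcal{N}})\neq\emptyset$ for every $(\mathcal{M},\mathcal{N})$ singular value $\mu$ of $\mathcal{A}$.
   Context: Write $I_{1\ldots N}$ for $I_1\times\cdots\times I_N$. Einstein product: $(\mathcal{A}*_N\mathcal{B})_{i_1\ldots i_Nj_1\ldots j_L}=\sum_{k_1,\ldots,k_N}a_{i_1\ldots i_Nk_1\ldots k_N}b_{k_1\ldots k_Nj_1\ldots j_L}$ (also when $\mathcal{B}\in\mathbb{C}^{I_{1\ldots N}}$). $\mathcal{A}^H$ is the conjugate transpose; the identity tensor $\mathcal{I}$ has entry 1 where the two index blocks coincide, 0 elsewhere. $\langle\mathcal{X},\mathcal{Y}\rangle=\mathcal{Y}^H*_N\mathcal{X}$, $\|\mathcal{X}\|=\langle\mathcal{X},\mathcal{X}\rangle^{1/2}$. A tensor $\mathcal{M}$ is Hermitian positive definite if $\mathcal{M}^H=\mathcal{M}$ and $\langle\mathcal{M}*_N\mathcal{X},\mathcal{X}\rangle>0$ for nonzero $\mathcal{X}$. Numerical range: $W(\mathcal{A})=\{\langle\mathcal{A}*_N\mathcal{X},\mathcal{X}\rangle:\|\mathcal{X}\|=1\}$;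 $\mu^2W=\{\mu^2z:z\in W\}$. Weighted Moore-Penrose inverse $\mathcal{A}^{\dagger}_{\mathcal{M},\mathcal{N}}$: the unique $\mathcal{X}$ with $\mathcal{A}*_N\mathcal{X}*_N\mathcal{A}=\mathcal{A}$, $\mathcal{X}*_N\mathcal{A}*_N\mathcal{X}=\mathcal{X}$, $(\mathcal{M}*_N\mathcal{A}*_N\mathcal{X})^H=\mathcal{M}*_N\mathcal{A}*_N\mathcal{X}$, $(\mathcal{N}*_N\mathcal{X}*_N\mathcal{A})^H=\mathcal{N}*_N\mathcal{X}*_N\mathcal{A}$. $(\mathcal{M},\mathcal{N})$ singular values: writing $\mathcal{A}=\mathcal{U}*_N\mathcal{S}*_N\mathcal{V}^H$ with $\mathcal{U}^H*_N\mathcal{M}*_N\mathcal{U}=\mathcal{I}$, $\mathcal{V}^H*_N\mathcal{N}^{-1}*_N\mathcal{V}=\mathcal{I}$ and $\mathcal{S}$ a real tensor whose only nonzero entries are positive numbers at positions with equal linear indices $I=J\le r$ ($r$ the rank of the reshaped $(I_1\cdots I_N)\times(I_1\cdots I_N)$ matrix of $\mathcal{A}$), these positive numbers are the $(\mathcal{M},\mathcal{N})$ singular values; equivalently, the nonzero singular values of $\mathcal{M}^{1/2}*_N\mathcal{A}*_N\mathcal{N}^{-1/2}$. *)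

theory Defs
  imports Complex_Main
begin

text \<open>Tensors in C^(I_1 x ... x I_N x I_1 x ... x I_N) are modelled as functions of two
  multi-indices (nat lists of length N), required to vanish outside the index box.
  The dimension list I = [I_1, ..., I_N] is explicit (N = length I), indices are 0-based.\<close>

definition idx :: "nat list \<Rightarrow> nat list set" where
  "idx I = {is. length is = length I \<and> (\<forall>k<length I. is ! k < I ! k)}"

type_synonym tensor = "nat list \<Rightarrow> nat list \<Rightarrow> complex"
type_synonym tvec = "nat list \<Rightarrow> complex"

definition is_tensor :: "nat list \<Rightarrow> tensor \<Rightarrow> bool" where
  "is_tensor I A \<longleftrightarrow> (\<forall>i j. i \<notin> idx I \<or> j \<notin> idx I \<longrightarrow> A i j = 0)"

definition is_vec :: "nat list \<Rightarrow> tvec \<Rightarrow> bool" where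
  "is_vec I X \<longleftrightarrow> (\<forall>i. i \<notin> idx I \<longrightarrow> X i = 0)"

definition ein :: "nat list \<Rightarrow> tensor \<Rightarrow> tensor \<Rightarrow> tensor" where
  "ein I A B = (\<lambda>i j. if i \<in> idx I \<and> j \<in> idx I then (\<Sum>k\<in>idx I. A i k * B k j) else 0)"

definition einv :: "nat list \<Rightarrow> tensor \<Rightarrow> tvec \<Rightarrow> tvec" where
  "einv I A X = (\<lambda>i. if i \<in> idx I then (\<Sum>k\<in>idx I. A i k * X k) else 0)"

definition ctrans :: "tensor \<Rightarrow> tensor" where
  "ctrans A = (\<lambda>i j. cnj (A j i))"

definition idt :: "nat list \<Rightarrow> tensor" where
  "idt I = (\<lambda>i j. if i \<in> idx I \<and> i = j then 1 else 0)"

definition tinner :: "nat list \<Rightarrow> tvec \<Rightarrow> tvec \<Rightarrow> complex" where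
  "tinner I X Y = (\<Sum>i\<in>idx I. cnj (Y i) * X i)"

definition tnorm :: "nat list \<Rightarrow> tvec \<Rightarrow> real" where
  "tnorm I X = sqrt (Re (tinner I X X))"

definition numrange :: "nat list \<Rightarrow> tensor \<Rightarrow> complex set" where
  "numrange I A = {tinner I (einv I A X) X | X. is_vec I X \<and> tnorm I X = 1}"

definition hpd :: "nat list \<Rightarrow> tensor \<Rightarrow> bool" where
  "hpd I M \<longleftrightarrow> is_tensor I M \<and> ctrans M = M \<and>
     (\<forall>X. is_vec I X \<and> X \<noteq> (\<lambda>_. 0) \<longrightarrow>
        tinner I (einv I M X) X \<in> \<real> \<and> Re (tinner I (einv I M X) X) > 0)"

definition tinv :: "nat list \<Rightarrow> tensor \<Rightarrow> tensor" where
  "tinv I N = (THE X. is_tensor I X \<and> ein I N X = idt I)"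

definition wmp :: "nat list \<Rightarrow> tensor \<Rightarrow> tensor \<Rightarrow> tensor \<Rightarrow> tensor" where
  "wmp I M N A = (THE X. is_tensor I X \<and>
      ein I (ein I A X) A = A \<and>
      ein I (ein I X A) X = X \<and>
      ctrans (ein I (ein I M A) X) = ein I (ein I M A) X \<and>
      ctrans (ein I (ein I N X) A) = ein I (ein I N X) A)"

definition mn_singular_value :: "nat list \<Rightarrow> tensor \<Rightarrow> tensor \<Rightarrow> tensor \<Rightarrow> real \<Rightarrow> bool" where
  "mn_singular_value I M N A \<mu> \<longleftrightarrow>
    (\<exists>U S V. is_tensor I U \<and> is_tensor I S \<and> is_tensor I V \<and>
      ein I (ein I (ctrans U) M) U = idt I \<and>
      ein I (ein I (ctrans V) (tinv I N)) V = idt I \<and>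
      A = ein I (ein I U S) (ctrans V) \<and>
      (\<forall>i j. S i j \<in> \<real>) \<and>
      (\<forall>i j. i \<noteq> j \<longrightarrow> S i j = 0) \<and>
      (\<forall>i. S i i \<noteq> 0 \<longrightarrow> Re (S i i) > 0) \<and>
      \<mu> > 0 \<and> (\<exists>i\<in>idx I. S i i = complex_of_real \<mu>))"

end

theory Submission
  imports Defs
begin

text \<open>For M = N = b I (b > 0), an (M,N) singular value decomposition A = U S V^H becomes an
  ordinary one after rescaling U by sqrt b and V by 1 / sqrt b. A singular value \<mu> then comes
  with unit vectors x, y such that A x = \<mu> y and A^H y = \<mu> x, and the weighted Moore-Penrose
  inverse is the ordinary one, which maps y to x / \<mu>. Hence
  <A^H x, x> = <x, A x> = \<mu> <x, y> = \<mu>^2 <A^dagger y, y>, a common point of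
  W(A^H) = W(A) and \<mu>^2 W(A^dagger).\<close>

lemma finite_idx: "finite (idx I)"
proof (rule finite_subset)
  show "idx I \<subseteq> {xs. set xs \<subseteq> {..<Max (insert 0 (set I))} \<and> length xs = length I}"
    by (force simp: idx_def in_set_conv_nth intro: less_le_trans[OF _ Max_ge])
qed (simp add: finite_lists_length_eq)

definition smul :: "complex \<Rightarrow> tensor \<Rightarrow> tensor" where
  "smul c A = (\<lambda>i j. c * A i j)"

definition col :: "tensor \<Rightarrow> nat list \<Rightarrow> tvec" where
  "col A j = (\<lambda>i. A i j)"

definition diag :: "nat list \<Rightarrow> tvec \<Rightarrow> tensor" where
  "diag I d = (\<lambda>i j. if i = j \<and> i \<in> idx I then d i else 0)"

lemma ein_assoc: "ein I (ein I A B) C = ein I A (ein I B C)"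
  unfolding ein_def
  by (auto simp: fun_eq_iff sum_distrib_left sum_distrib_right mult.assoc intro: sum.swap)

lemma ctrans_ein: "ctrans (ein I A B) = ein I (ctrans B) (ctrans A)"
  unfolding ein_def ctrans_def by (auto simp: fun_eq_iff mult.commute)

lemma ctrans_ctrans [simp]: "ctrans (ctrans A) = A"
  unfolding ctrans_def by simp

lemma ctrans_smul [simp]: "ctrans (smul c A) = smul (cnj c) (ctrans A)"
  unfolding ctrans_def smul_def by simp

lemma ein_smul_left [simp]: "ein I (smul c A) B = smul c (ein I A B)"
  unfolding ein_def smul_def by (auto simp: fun_eq_iff sum_distrib_left mult.assoc)

lemma ein_smul_right [simp]: "ein I A (smul c B) = smul c (ein I A B)"
  unfolding ein_def smul_def by (auto simp: fun_eq_iff sum_distrib_left mult.left_commute)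

lemma smul_smul [simp]: "smul c (smul d A) = smul (c * d) A"
  unfolding smul_def by (simp add: mult.assoc)

lemma smul_one [simp]: "smul 1 A = A"
  unfolding smul_def by simp

lemma smul_cancel: "c \<noteq> 0 \<Longrightarrow> smul c A = smul c B \<longleftrightarrow> A = B"
  unfolding smul_def by (auto simp: fun_eq_iff)

lemma is_tensor_ein [simp]: "is_tensor I (ein I A B)"
  unfolding is_tensor_def ein_def by auto

lemma is_tensor_ctrans [simp]: "is_tensor I (ctrans A) \<longleftrightarrow> is_tensor I A"
  unfolding is_tensor_def ctrans_def by auto

lemma is_tensor_smul [simp]: "is_tensor I A \<Longrightarrow> is_tensor I (smul c A)"
  unfolding is_tensor_def smul_def by auto

lemma is_tensor_idt [simp]: "is_tensor I (idt I)"
  unfolding is_tensor_def idt_def by auto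

lemma is_tensor_diag [simp]: "is_tensor I (diag I d)"
  unfolding is_tensor_def diag_def by auto

lemma ein_idt_left [simp]: "is_tensor I B \<Longrightarrow> ein I (idt I) B = B"
  unfolding is_tensor_def ein_def idt_def
  by (auto simp: fun_eq_iff if_distrib[of "\<lambda>x. x * _"] finite_idx cong: if_cong)

lemma ein_idt_right [simp]: "is_tensor I B \<Longrightarrow> ein I B (idt I) = B"
  unfolding is_tensor_def ein_def idt_def
  by (auto simp: fun_eq_iff if_distrib[of "\<lambda>x. _ * x"] finite_idx cong: if_cong)

lemma ctrans_idt [simp]: "ctrans (idt I) = idt I"
  unfolding ctrans_def idt_def by (auto simp: fun_eq_iff)

lemma ein_diag_diag [simp]: "ein I (diag I f) (diag I g) = diag I (\<lambda>i. f i * g i)"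
  unfolding ein_def diag_def
  by (auto simp: fun_eq_iff if_distrib[of "\<lambda>x. x * _"] finite_idx cong: if_cong)

lemma ctrans_diag [simp]: "ctrans (diag I d) = diag I (\<lambda>i. cnj (d i))"
  unfolding ctrans_def diag_def by (auto simp: fun_eq_iff)

lemma ein_diag_right: "j \<in> idx I \<Longrightarrow> ein I A (diag I d) i j = (if i \<in> idx I then A i j * d j else 0)"
  unfolding ein_def diag_def
  by (auto simp: if_distrib[of "\<lambda>x. _ * x"] finite_idx cong: if_cong)

lemma einv_ein: "einv I (ein I A B) X = einv I A (einv I B X)"
  unfolding einv_def ein_def
  by (auto simp: fun_eq_iff sum_distrib_left sum_distrib_right mult.assoc intro: sum.swap)

lemma einv_scale: "einv I A (\<lambda>k. c * X k) = (\<lambda>i. c * einv I A X i)"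
  unfolding einv_def by (auto simp: fun_eq_iff sum_distrib_left mult.left_commute)

lemma einv_col: "j \<in> idx I \<Longrightarrow> einv I A (col B j) = col (ein I A B) j"
  unfolding einv_def ein_def col_def by (auto simp: fun_eq_iff)

lemma is_vec_col: "is_tensor I A \<Longrightarrow> is_vec I (col A j)"
  unfolding is_vec_def is_tensor_def col_def by auto

lemma tinner_col: "j \<in> idx I \<Longrightarrow> tinner I (col A j) (col B j) = ein I (ctrans B) A j j"
  unfolding tinner_def ein_def ctrans_def col_def by auto

lemma tinner_scale_left: "tinner I (\<lambda>k. c * X k) Y = c * tinner I X Y"
  unfolding tinner_def by (auto simp: sum_distrib_left mult.left_commute)

lemma tinner_scale_right: "tinner I X (\<lambda>k. c * Y k) = cnj c * tinner I X Y"
  unfolding tinner_def by (auto simp: sum_distrib_left mult.assoc)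

lemma tinner_einv_ctrans: "tinner I (einv I (ctrans A) X) Y = tinner I X (einv I A Y)"
  unfolding tinner_def einv_def ctrans_def
  by (auto simp: sum_distrib_left sum_distrib_right mult.commute mult.left_commute intro: sum.swap)

definition is_mp_inverse :: "nat list \<Rightarrow> tensor \<Rightarrow> tensor \<Rightarrow> bool" where
  "is_mp_inverse I A X \<longleftrightarrow> is_tensor I X \<and>
     ein I (ein I A X) A = A \<and> ein I (ein I X A) X = X \<and>
     ctrans (ein I A X) = ein I A X \<and> ctrans (ein I X A) = ein I X A"

lemma mp_inverse_unique:
  assumes "is_mp_inverse I A X" "is_mp_inverse I A Y"
  shows "X = Y"
proof -
  from assms have AXA: "ein I (ein I A X) A = A" and XAX: "ein I (ein I X A) X = X"
    and AX: "ctrans (ein I A X) = ein I A X" and XA: "ctrans (ein I X A) = ein I X A"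
    and AYA: "ein I (ein I A Y) A = A" and YAY: "ein I (ein I Y A) Y = Y"
    and AY: "ctrans (ein I A Y) = ein I A Y" and YA: "ctrans (ein I Y A) = ein I Y A"
    unfolding is_mp_inverse_def by auto
  have AH_AY: "ctrans A = ein I (ctrans A) (ein I A Y)"
    by (metis AYA AY ctrans_ein)
  have XA_AH: "ctrans A = ein I (ein I X A) (ctrans A)"
    by (metis AXA XA ctrans_ein ein_assoc)
  have "X = ein I X (ein I (ctrans X) (ctrans A))"
    by (metis XAX AX ein_assoc ctrans_ein)
  also have "\<dots> = ein I X (ein I (ein I A X) (ein I A Y))"
    by (metis AH_AY AX ein_assoc ctrans_ein)
  also have "\<dots> = ein I X (ein I A Y)"
    by (metis XAX ein_assoc)
  also have "\<dots> = ein I (ein I (ein I X A) (ein I Y A)) Y"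
    by (metis YAY ein_assoc)
  also have "\<dots> = ein I (ein I (ein I X A) (ein I (ctrans A) (ctrans Y))) Y"
    by (metis YA ctrans_ein)
  also have "\<dots> = Y"
    by (metis XA_AH YAY YA ein_assoc ctrans_ein)
  finally show ?thesis .
qed

lemma wmp_scalar_weights:
  assumes "c \<in> \<real>" "c \<noteq> 0" "is_mp_inverse I A X"
  shows "wmp I (smul c (idt I)) (smul c (idt I)) A = X"
proof -
  have "cnj c = c"
    using assms(1) by (simp add: Reals_cnj_iff)
  have "is_tensor I Y \<and> ein I (ein I A Y) A = A \<and> ein I (ein I Y A) Y = Y \<and>
      ctrans (ein I (ein I (smul c (idt I)) A) Y) = ein I (ein I (smul c (idt I)) A) Y \<and>
      ctrans (ein I (ein I (smul c (idt I)) Y) A) = ein I (ein I (smul c (idt I)) Y) A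
    \<longleftrightarrow> is_mp_inverse I A Y" for Y
    using \<open>cnj c = c\<close> assms(2) by (simp add: ein_assoc smul_cancel is_mp_inverse_def)
  then show ?thesis
    unfolding wmp_def using assms(3) mp_inverse_unique by (simp add: the_equality)
qed

text \<open>Only the Penrose equations A X A = A and (X A)^H = X A are needed: together they give
  X A A^H = A^H, so X inverts A on the range of A^H.\<close>
lemma mp_inverse_singular_pair:
  assumes "ein I (ein I A X) A = A" "ctrans (ein I X A) = ein I X A"
    and "einv I A x = (\<lambda>k. \<mu> * y k)" "einv I (ctrans A) y = (\<lambda>k. \<mu> * x k)" "\<mu> \<noteq> 0"
  shows "einv I X y = (\<lambda>k. inverse \<mu> * x k)"
proof -
  have "ein I (ein I X A) (ctrans A) = ctrans (ein I (ein I A X) A)"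
    using assms(2) by (metis ctrans_ein ein_assoc)
  then have "ein I (ein I X A) (ctrans A) = ctrans A"
    using assms(1) by simp
  then have "einv I X (einv I A (einv I (ctrans A) y)) = einv I (ctrans A) y"
    by (metis einv_ein)
  then have "(\<lambda>k. \<mu> * (\<mu> * einv I X y k)) = (\<lambda>k. \<mu> * x k)"
    by (simp add: assms(3,4) einv_scale)
  then show ?thesis
    using assms(5) by (simp add: fun_eq_iff field_simps)
qed

lemma ein_diag_diag_assoc:
  "ein I (diag I f) (ein I (diag I g) Z) = ein I (diag I (\<lambda>i. f i * g i)) Z"
  by (simp flip: ein_assoc)

lemma ein_ctrans_isometry:
  assumes "ein I (ctrans U) U = idt I" "is_tensor I Z"
  shows "ein I (ctrans U) (ein I U Z) = Z"
  using assms by (simp flip: ein_assoc)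

definition is_svd :: "nat list \<Rightarrow> tensor \<Rightarrow> tensor \<Rightarrow> tvec \<Rightarrow> tensor \<Rightarrow> bool" where
  "is_svd I A U d V \<longleftrightarrow> is_tensor I U \<and> is_tensor I V \<and>
     ein I (ctrans U) U = idt I \<and> ein I (ctrans V) V = idt I \<and> (\<forall>i. d i \<in> \<real>) \<and>
     A = ein I (ein I U (diag I d)) (ctrans V)"

text \<open>Since inverse 0 = 0, the diagonal of inverses is the pseudo-inverse S^+ of S.\<close>
lemma mp_inverse_of_svd:
  assumes "is_svd I A U d V"
  shows "is_mp_inverse I A (ein I (ein I V (diag I (\<lambda>i. inverse (d i)))) (ctrans U))"
proof -
  have U: "is_tensor I U" "ein I (ctrans U) U = idt I"
    and V: "is_tensor I V" "ein I (ctrans V) V = idt I"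
    and A: "A = ein I (ein I U (diag I d)) (ctrans V)"
    and d_real: "\<And>i. cnj (d i) = d i"
    using assms by (auto simp: is_svd_def Reals_cnj_iff)
  have inverse_cancel: "x * inverse x * x = x" "inverse x * x * inverse x = inverse x" for x :: complex
    by (cases "x = 0"; simp)+
  show ?thesis
    unfolding is_mp_inverse_def A
    by (simp add: ein_assoc ctrans_ein ein_ctrans_isometry U V ein_diag_diag_assoc
        inverse_cancel d_real)
qed

lemma tnorm_col_isometry:
  assumes "ein I (ctrans U) U = idt I" "j \<in> idx I"
  shows "tnorm I (col U j) = 1"
  using assms by (simp add: tnorm_def tinner_col idt_def)

lemma col_ein_diag:
  assumes "is_tensor I U" "j \<in> idx I"
  shows "col (ein I U (diag I d)) j = (\<lambda>k. d j * col U j k)"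
  using assms by (auto simp: fun_eq_iff col_def ein_diag_right is_tensor_def)

lemma svd_singular_pair:
  assumes "is_svd I A U d V" "j \<in> idx I"
  shows "einv I A (col V j) = (\<lambda>k. d j * col U j k)"
    and "einv I (ctrans A) (col U j) = (\<lambda>k. d j * col V j k)"
proof -
  have U: "is_tensor I U" "ein I (ctrans U) U = idt I"
    and V: "is_tensor I V" "ein I (ctrans V) V = idt I"
    and A: "A = ein I (ein I U (diag I d)) (ctrans V)"
    and d_real: "\<And>i. cnj (d i) = d i"
    using assms(1) by (auto simp: is_svd_def Reals_cnj_iff)
  have "ein I A V = ein I U (diag I d)"
    by (simp add: A ein_assoc V)
  then show "einv I A (col V j) = (\<lambda>k. d j * col U j k)"
    using assms(2) by (simp add: einv_col col_ein_diag U)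
  have "ein I (ctrans A) U = ein I V (diag I d)"
    by (simp add: A ctrans_ein ein_assoc U d_real)
  then show "einv I (ctrans A) (col U j) = (\<lambda>k. d j * col V j k)"
    using assms(2) by (simp add: einv_col col_ein_diag V)
qed

lemma hpd_scaled_idt:
  assumes "hpd I (smul \<beta> (idt I))" "j \<in> idx I"
  obtains b where "0 < b" "\<beta> = of_real b"
proof -
  have "is_vec I (col (idt I) j)"
    by (simp add: is_vec_col)
  moreover have "col (idt I) j \<noteq> (\<lambda>_. 0)"
    using assms(2) by (auto simp: fun_eq_iff col_def idt_def)
  moreover have "tinner I (einv I (smul \<beta> (idt I)) (col (idt I) j)) (col (idt I) j) = \<beta>"
    using assms(2) by (simp add: einv_col tinner_col, simp add: smul_def idt_def)
  ultimately have "\<beta> \<in> \<real>" "0 < Re \<beta>"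
    using assms(1) unfolding hpd_def by metis+
  then show thesis
    using that by (metis Reals_cases of_real_Re)
qed

lemma tinv_scaled_idt:
  assumes "c \<noteq> 0"
  shows "tinv I (smul c (idt I)) = smul (inverse c) (idt I)"
  unfolding tinv_def
proof (rule the_equality)
  show "is_tensor I (smul (inverse c) (idt I)) \<and>
      ein I (smul c (idt I)) (smul (inverse c) (idt I)) = idt I"
    using assms by simp
next
  fix X assume "is_tensor I X \<and> ein I (smul c (idt I)) X = idt I"
  then have "smul c X = idt I"
    by auto
  then show "X = smul (inverse c) (idt I)"
    using assms by (metis smul_smul smul_one left_inverse)
qed

lemma diag_of_diagonal:
  assumes "is_tensor I S" "\<forall>i j. i \<noteq> j \<longrightarrow> S i j = 0"
  shows "S = diag I (\<lambda>i. S i i)"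
  using assms by (auto simp: fun_eq_iff diag_def is_tensor_def)

lemma mn_singular_value_scaled_idt:
  assumes "0 < b"
    and "mn_singular_value I (smul (of_real b) (idt I)) (smul (of_real b) (idt I)) A \<mu>"
  obtains U d V j where "is_svd I A U d V" "j \<in> idx I" "d j = of_real \<mu>" "0 < \<mu>"
proof -
  define \<beta> where "\<beta> = complex_of_real b"
  obtain U S V j where U: "is_tensor I U" "ein I (ein I (ctrans U) (smul \<beta> (idt I))) U = idt I"
    and V: "is_tensor I V" "ein I (ein I (ctrans V) (tinv I (smul \<beta> (idt I)))) V = idt I"
    and S: "is_tensor I S" "\<forall>i j. S i j \<in> \<real>" "\<forall>i j. i \<noteq> j \<longrightarrow> S i j = 0"
    and A: "A = ein I (ein I U S) (ctrans V)"
    and j: "j \<in> idx I" "S j j = of_real \<mu>" and "0 < \<mu>"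
    using assms(2) unfolding mn_singular_value_def \<beta>_def by blast
  define s where "s = complex_of_real (sqrt b)"
  have s: "cnj s = s" "s * s = \<beta>" "s \<noteq> 0" "\<beta> \<noteq> 0"
    using assms(1) by (simp_all add: s_def \<beta>_def flip: of_real_mult)
  have "smul \<beta> (ein I (ctrans U) U) = idt I"
    using U by simp
  then have "ein I (ctrans (smul s U)) (smul s U) = idt I"
    using s by simp
  moreover have "smul (inverse \<beta>) (ein I (ctrans V) V) = idt I"
    using V s by (simp add: tinv_scaled_idt)
  then have "ein I (ctrans (smul (inverse s) V)) (smul (inverse s) V) = idt I"
    using s(1,2) by (simp add: inverse_mult_distrib[symmetric])
  moreover have "A = ein I (ein I (smul s U) (diag I (\<lambda>i. S i i))) (ctrans (smul (inverse s) V))"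
    using A S s by (simp flip: diag_of_diagonal)
  ultimately have "is_svd I A (smul s U) (\<lambda>i. S i i) (smul (inverse s) V)"
    using U V S by (simp add: is_svd_def)
  then show thesis
    using that j \<open>0 < \<mu>\<close> by blast
qed

lemma singular_pair_numrange:
  assumes "is_vec I x" "tnorm I x = 1" "is_vec I y" "tnorm I y = 1" "\<mu> \<noteq> 0"
    and "einv I A x = (\<lambda>k. of_real \<mu> * y k)" "einv I X y = (\<lambda>k. inverse (of_real \<mu>) * x k)"
  shows "tinner I (einv I (ctrans A) x) x \<in>
    numrange I (ctrans A) \<inter> {complex_of_real (\<mu>\<^sup>2) * z | z. z \<in> numrange I X}"
proof -
  have "tinner I (einv I (ctrans A) x) x = of_real \<mu> * tinner I x y"
    by (simp add: tinner_einv_ctrans assms(6) tinner_scale_right)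
  also have "\<dots> = of_real (\<mu>\<^sup>2) * tinner I (einv I X y) y"
    using assms(5) by (simp add: assms(7) tinner_scale_left power2_eq_square)
  finally show ?thesis
    using assms(1-4) unfolding numrange_def by blast
qed

theorem theorem6p10:
  fixes I :: "nat list" and A M N :: tensor and \<beta> :: complex and \<mu> :: real
  assumes "is_tensor I A"
    and "numrange I A = numrange I (ctrans A)"
    and "M = (\<lambda>i j. \<beta> * idt I i j)" and "N = (\<lambda>i j. \<beta> * idt I i j)"
    and "hpd I M" and "hpd I N"
    and "mn_singular_value I M N A \<mu>"
  shows "numrange I A \<inter> {complex_of_real (\<mu>\<^sup>2) * z | z. z \<in> numrange I (wmp I M N A)} \<noteq> {}"
proof -
  have M: "M = smul \<beta> (idt I)" and N: "N = smul \<beta> (idt I)"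
    using assms(3,4) by (simp_all add: smul_def)
  obtain i where "i \<in> idx I"
    using assms(7) unfolding mn_singular_value_def by blast
  then obtain b where "0 < b" and \<beta>: "\<beta> = of_real b"
    using assms(5) M hpd_scaled_idt by blast
  then obtain U d V j where svd: "is_svd I A U d V" and j: "j \<in> idx I" "d j = of_real \<mu>"
    and "0 < \<mu>"
    using assms(7) M N mn_singular_value_scaled_idt by metis
  have mp: "is_mp_inverse I A (wmp I M N A)"
    using mp_inverse_of_svd[OF svd] \<open>0 < b\<close> M N \<beta> wmp_scalar_weights by simp
  have AV: "einv I A (col V j) = (\<lambda>k. of_real \<mu> * col U j k)"
    and AU: "einv I (ctrans A) (col U j) = (\<lambda>k. of_real \<mu> * col V j k)"
    using svd_singular_pair[OF svd j(1)] j(2) by simp_all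
  have XU: "einv I (wmp I M N A) (col U j) = (\<lambda>k. inverse (of_real \<mu>) * col V j k)"
    using mp AV AU \<open>0 < \<mu>\<close> by (intro mp_inverse_singular_pair) (auto simp: is_mp_inverse_def)
  have "is_vec I (col V j)" "tnorm I (col V j) = 1" "is_vec I (col U j)" "tnorm I (col U j) = 1"
    using svd j(1) by (simp_all add: is_svd_def is_vec_col tnorm_col_isometry)
  from singular_pair_numrange[OF this _ AV XU] \<open>0 < \<mu>\<close> show ?thesis
    using assms(2) by auto
qed

end
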